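(* Let $G$ be a graph on $n$ vertices with $3\leq n\leq 7$ and let $k$ be an integer with $2\leq k<n$. If $\psi_k(G)=n-k+1$, then $\psi_j(G)=n-j+1$ for all integers $j$ with $k<j\leq n$.
   Context: All graphs are finite, simple and nonempty. For a graph $G$ and a positive integer $k$, a $k$-path vertex cover ($k$-PVC) of $G$ is a set $S$ of vertices such that every path on $k$ vertices in $G$ contains at least one vertex of $S$ (if $G$ has no path on $k$ vertices, the empty set is a $k$-PVC). $\psi_k(G)$ denotes the minimum cardinality of a $k$-PVC of $G$. *)

theory Defs
  imports Main
begin

definition simple_graph :: "'a set \<Rightarrow> ('a \<Rightarrow> 'a \<Rightarrow> bool) \<Rightarrow> bool" where
  "simple_graph V E \<longleftrightarrow> finite V \<and> V \<noteq> {} \<and>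
     (\<forall>u v. E u v \<longrightarrow> u \<in> V \<and> v \<in> V) \<and>
     (\<forall>u v. E u v \<longrightarrow> E v u) \<and> (\<forall>v. \<not> E v v)"

definition is_path :: "'a set \<Rightarrow> ('a \<Rightarrow> 'a \<Rightarrow> bool) \<Rightarrow> 'a list \<Rightarrow> bool" where
  "is_path V E p \<longleftrightarrow> distinct p \<and> set p \<subseteq> V \<and>
     (\<forall>i. Suc i < length p \<longrightarrow> E (p ! i) (p ! Suc i))"

definition is_kpvc :: "'a set \<Rightarrow> ('a \<Rightarrow> 'a \<Rightarrow> bool) \<Rightarrow> nat \<Rightarrow> 'a set \<Rightarrow> bool" where
  "is_kpvc V E k S \<longleftrightarrow> S \<subseteq> V \<and>
     (\<forall>p. is_path V E p \<and> length p = k \<longrightarrow> set p \<inter> S \<noteq> {})"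

definition psi :: "'a set \<Rightarrow> ('a \<Rightarrow> 'a \<Rightarrow> bool) \<Rightarrow> nat \<Rightarrow> nat" where
  "psi V E k = Min (card ` {S. is_kpvc V E k S})"

end

theory Submission
  imports Defs
begin

text \<open>By counting, \<open>\<psi>\<^sub>j(G) = n - j + 1\<close> says exactly that every \<open>j\<close>-subset of the vertices
  spans a path, i.e.\ induces a traceable subgraph. So it suffices to show that if all \<open>k\<close>-sets
  are traceable (\<open>k \<ge> 2\<close>) then so is every \<open>(k+1)\<close>-set \<open>W\<close> with \<open>k + 1 \<le> 7\<close>.
  If \<open>W\<close> is not traceable, then for each \<open>u \<in> W\<close> a path through \<open>W - {u}\<close> cannot be extended
  by \<open>u\<close>: the neighbours of \<open>u\<close> sit at inner, pairwise non-consecutive positions of that path,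
  of which there are at most two among the \<open>\<le> 4\<close> inner positions. On the other hand some vertex
  of \<open>W\<close> has three neighbours in \<open>W\<close>: take \<open>v \<in> W\<close> and a path \<open>P\<close> through \<open>W - {v}\<close>;
  \<open>v\<close> has a neighbour \<open>x\<close> in \<open>W\<close> (look at a path through \<open>W\<close> minus an end of \<open>P\<close>), which is an
  inner vertex of \<open>P\<close> and thus has its two \<open>P\<close>-neighbours besides \<open>v\<close>.\<close>

definition traceable :: "'a set \<Rightarrow> ('a \<Rightarrow> 'a \<Rightarrow> bool) \<Rightarrow> 'a set \<Rightarrow> bool" where
  "traceable V E W \<longleftrightarrow> (\<exists>p. is_path V E p \<and> set p = W)"

lemma simple_graph_sym: "simple_graph V E \<Longrightarrow> E x y \<Longrightarrow> E y x"
  and simple_graph_irrefl: "simple_graph V E \<Longrightarrow> \<not> E x x"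
  and simple_graph_finite: "simple_graph V E \<Longrightarrow> finite V"
  unfolding simple_graph_def by blast+

lemma is_path_iff_successively:
  "is_path V E p \<longleftrightarrow> distinct p \<and> set p \<subseteq> V \<and> successively E p"
  unfolding is_path_def successively_conv_nth by blast

lemma is_path_edge: "is_path V E p \<Longrightarrow> Suc i < length p \<Longrightarrow> E (p ! i) (p ! Suc i)"
  by (simp add: is_path_def)

lemma length_path: "is_path V E p \<Longrightarrow> length p = card (set p)"
  by (simp add: is_path_def distinct_card)

lemma is_path_Cons:
  assumes "is_path V E p" "u \<in> V" "u \<notin> set p" "p \<noteq> []" "E u (hd p)"
  shows "is_path V E (u # p)"
  using assms unfolding is_path_iff_successively by (auto simp: successively_Cons)

lemma is_path_snoc:
  assumes "is_path V E p" "u \<in> V" "u \<notin> set p" "p \<noteq> []" "E (last p) u"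
  shows "is_path V E (p @ [u])"
  using assms unfolding is_path_iff_successively by (auto simp: successively_append_iff)

lemma is_path_insert_between:
  assumes "is_path V E p" "u \<in> V" "u \<notin> set p" "Suc i < length p"
    and "E (p ! i) u" "E u (p ! Suc i)"
  shows "is_path V E (take (Suc i) p @ u # drop (Suc i) p)"
proof -
  let ?A = "take (Suc i) p" and ?B = "drop (Suc i) p"
  have "last ?A = p ! i" "hd ?B = p ! Suc i" "?A \<noteq> []" "?B \<noteq> []"
    using assms(4) by (auto simp: take_Suc_conv_app_nth hd_drop_conv_nth)
  moreover have "successively E ?A" "successively E ?B"
    using assms(1) unfolding is_path_iff_successively
    by (metis append_take_drop_id successively_append_iff)+
  moreover have "distinct ?A" "distinct ?B" "set ?A \<inter> set ?B = {}"
    using assms(1) distinct_append[of ?A ?B] unfolding is_path_def by simp_all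
  moreover have "u \<notin> set ?A" "u \<notin> set ?B" "set ?A \<union> set ?B \<subseteq> V"
    using assms(1,3) unfolding is_path_def by (auto dest: in_set_takeD in_set_dropD)
  ultimately show ?thesis
    using assms(2,5,6) unfolding is_path_iff_successively
    by (simp add: successively_append_iff successively_Cons distinct_append)
qed

context
  fixes V :: "'a set" and E :: "'a \<Rightarrow> 'a \<Rightarrow> bool" and p :: "'a list" and u :: 'a
  assumes path: "is_path V E p" and u: "u \<in> V" "u \<notin> set p"
    and not_traceable: "\<not> traceable V E (insert u (set p))"
    and sym: "\<And>x y. E x y \<Longrightarrow> E y x"
begin

lemma non_extendable_neighbour_inner:
  assumes "i < length p" "E u (p ! i)"
  shows "0 < i \<and> Suc i < length p"
proof -
  have "p \<noteq> []" using assms(1) by auto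
  have "\<not> is_path V E q" if "set q = insert u (set p)" for q
    using not_traceable that unfolding traceable_def by blast
  then have "\<not> is_path V E (u # p)" "\<not> is_path V E (p @ [u])" by simp_all
  then have "\<not> E u (p ! 0)" "\<not> E u (p ! (length p - 1))"
    using is_path_Cons[OF path u] is_path_snoc[OF path u] \<open>p \<noteq> []\<close> sym
    by (auto simp: hd_conv_nth last_conv_nth)
  then have "i \<noteq> 0" "i \<noteq> length p - 1" using assms(2) by metis+
  then show ?thesis using assms(1) by linarith
qed

lemma non_extendable_neighbours_apart:
  assumes "i < length p" "j < length p" "i \<noteq> j" "E u (p ! i)" "E u (p ! j)"
  shows "i + 1 < j \<or> j + 1 < i"
proof -
  have no_consecutive: "\<not> (E u (p ! m) \<and> E u (p ! Suc m))" if "Suc m < length p" for m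
  proof
    assume "E u (p ! m) \<and> E u (p ! Suc m)"
    then have "is_path V E (take (Suc m) p @ u # drop (Suc m) p)"
      using is_path_insert_between[OF path u that] sym by blast
    moreover have "set (take (Suc m) p @ u # drop (Suc m) p) = insert u (set p)"
      by (metis Un_insert_right append_take_drop_id list.simps(15) set_append)
    ultimately show False using not_traceable unfolding traceable_def by blast
  qed
  show ?thesis
  proof (rule ccontr)
    assume "\<not> ?thesis"
    then have "j = Suc i \<or> i = Suc j" using assms(3) by linarith
    then show False using no_consecutive assms by blast
  qed
qed

end

lemma no_three_pairwise_apart_in_1_4:
  fixes a b c :: nat
  assumes "{a, b, c} \<subseteq> {1..4}"
    and "a + 1 < b \<or> b + 1 < a" "a + 1 < c \<or> c + 1 < a" "b + 1 < c \<or> c + 1 < b"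
  shows False
  using assms by auto

lemma minimal_non_traceable_no_three_neighbours:
  assumes g: "simple_graph V E" and W: "W \<subseteq> V" "card W \<le> 7"
    and minimal: "\<And>w. w \<in> W \<Longrightarrow> traceable V E (W - {w})"
    and not_traceable: "\<not> traceable V E W"
    and u: "u \<in> W" and abc: "{a, b, c} \<subseteq> W" "distinct [a, b, c]"
    and edges: "E u a" "E u b" "E u c"
  shows False
proof -
  obtain q where q: "is_path V E q" "set q = W - {u}"
    using minimal[OF u] unfolding traceable_def by blast
  have "finite W" using W(1) simple_graph_finite[OF g] by (rule finite_subset)
  then have "length q \<le> 6" using length_path[OF q(1)] q(2) W(2) u by simp
  have uq: "u \<in> V" "u \<notin> set q" using u W(1) q(2) by auto
  have "insert u (set q) = W" using q(2) u by blast
  then have nt: "\<not> traceable V E (insert u (set q))" using not_traceable by simp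
  note inner = non_extendable_neighbour_inner[OF q(1) uq nt simple_graph_sym[OF g]]
  note apart = non_extendable_neighbours_apart[OF q(1) uq nt simple_graph_sym[OF g]]
  have "\<exists>i<length q. q ! i = x" if "x \<in> W" "E u x" for x
  proof -
    have "x \<noteq> u" using that(2) simple_graph_irrefl[OF g] by blast
    then have "x \<in> set q" using that(1) q(2) by blast
    then show ?thesis by (simp add: in_set_conv_nth)
  qed
  then obtain i j l where
    ijl: "i < length q" "q ! i = a" "j < length q" "q ! j = b" "l < length q" "q ! l = c"
    using abc(1) edges by (metis insert_subset)
  have "{i, j, l} \<subseteq> {1..4}"
    using inner ijl edges \<open>length q \<le> 6\<close> by fastforce
  moreover have "i \<noteq> j" "i \<noteq> l" "j \<noteq> l" using ijl abc(2) by auto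
  then have "i + 1 < j \<or> j + 1 < i" "i + 1 < l \<or> l + 1 < i" "j + 1 < l \<or> l + 1 < j"
    using apart ijl edges by simp_all
  ultimately show False by (rule no_three_pairwise_apart_in_1_4)
qed

lemma path_vertex_has_neighbour:
  assumes "is_path V E p" "2 \<le> length p" "v \<in> set p" and sym: "\<And>x y. E x y \<Longrightarrow> E y x"
  shows "\<exists>x\<in>set p. E v x"
proof -
  obtain i where i: "i < length p" "p ! i = v" using assms(3) by (auto simp: in_set_conv_nth)
  show ?thesis
  proof (cases "Suc i < length p")
    case True
    then show ?thesis using is_path_edge[OF assms(1)] i by (metis nth_mem)
  next
    case False
    then obtain h where "i = Suc h" using assms(2) i(1) by (cases i) auto
    then show ?thesis using is_path_edge[OF assms(1), of h] i sym by (metis Suc_lessD nth_mem)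
  qed
qed

lemma traceable_if_deletions_traceable:
  assumes g: "simple_graph V E" and W: "W \<subseteq> V" "3 \<le> card W" "card W \<le> 7"
    and minimal: "\<And>w. w \<in> W \<Longrightarrow> traceable V E (W - {w})"
  shows "traceable V E W"
proof (rule ccontr)
  assume not_traceable: "\<not> traceable V E W"
  note sym = simple_graph_sym[OF g]
  have fin: "finite W" using W(1) simple_graph_finite[OF g] by (rule finite_subset)
  obtain v where v: "v \<in> W" using W(2) by fastforce
  obtain P where P: "is_path V E P" "set P = W - {v}"
    using minimal[OF v] unfolding traceable_def by blast
  have "2 \<le> length P" using length_path[OF P(1)] P(2) fin v W(2) by simp
  define w where "w = hd P"
  have "P \<noteq> []" using \<open>2 \<le> length P\<close> by auto
  then have "w \<in> set P" unfolding w_def by simp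
  then have w: "w \<in> W" "w \<noteq> v" using P(2) by auto
  obtain R where R: "is_path V E R" "set R = W - {w}"
    using minimal[OF w(1)] unfolding traceable_def by blast
  have "2 \<le> length R" using length_path[OF R(1)] R(2) fin w W(2) by simp
  then obtain x where x: "x \<in> W" "E v x"
    using path_vertex_has_neighbour[OF R(1) _ _ sym, of v] R(2) v w(2) by blast
  have "x \<noteq> v" using x(2) simple_graph_irrefl[OF g] by blast
  then obtain j where j: "j < length P" "P ! j = x"
    using x(1) P(2) by (metis Diff_iff in_set_conv_nth singletonD)
  have vP: "v \<in> V" "v \<notin> set P" using v W(1) P(2) by auto
  have "insert v (set P) = W" using P(2) v by blast
  then have "0 < j \<and> Suc j < length P"
    using non_extendable_neighbour_inner[OF P(1) vP _ sym j(1)] not_traceable x(2) j(2) by simp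
  then obtain h where h: "j = Suc h" "Suc j < length P" by (cases j) auto
  let ?a = "P ! h" and ?b = "P ! Suc j"
  have "E x ?a" "E x ?b" using is_path_edge[OF P(1)] h j sym by metis+
  moreover have "?a \<in> set P" "?b \<in> set P" using h j(1) by simp_all
  moreover have "?a \<noteq> ?b"
    using P(1) h j(1) nth_eq_iff_index_eq[of P h "Suc j"] unfolding is_path_def by simp
  moreover have "E x v" using x(2) sym by blast
  ultimately show False
    using minimal_non_traceable_no_three_neighbours[OF g W(1,3) minimal not_traceable x(1), of v ?a ?b]
      P(2) v vP(2)
    by auto
qed

lemma all_traceable_upward:
  assumes g: "simple_graph V E" and k: "2 \<le> k" and j: "k \<le> j" "j \<le> 7"
    and base: "\<forall>T\<subseteq>V. card T = k \<longrightarrow> traceable V E T"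
  shows "\<forall>T\<subseteq>V. card T = j \<longrightarrow> traceable V E T"
proof -
  have "\<forall>T\<subseteq>V. card T = k + d \<longrightarrow> traceable V E T" if "k + d \<le> 7" for d
    using that
  proof (induction d)
    case 0
    then show ?case using base by simp
  next
    case (Suc d)
    show ?case
    proof (intro allI impI)
      fix T assume T: "T \<subseteq> V" "card T = k + Suc d"
      have "finite T" using T(2) card.infinite by fastforce
      have "traceable V E (T - {w})" if "w \<in> T" for w
      proof -
        have "card (T - {w}) = k + d" using T(2) that \<open>finite T\<close> by simp
        moreover have "T - {w} \<subseteq> V" using T(1) by blast
        ultimately show ?thesis using Suc by simp
      qed
      then show "traceable V E T"
        using traceable_if_deletions_traceable[OF g T(1)] T(2) k Suc.prems by simp
    qed
  qed
  then show ?thesis using j by (metis le_add_diff_inverse)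
qed

lemma finite_kpvcs: "finite V \<Longrightarrow> finite {S. is_kpvc V E j S}"
  by (rule finite_subset[of _ "Pow V"]) (auto simp: is_kpvc_def)

lemma psi_le_card: "finite V \<Longrightarrow> is_kpvc V E j S \<Longrightarrow> psi V E j \<le> card S"
  unfolding psi_def by (simp add: finite_kpvcs)

lemma le_psi:
  assumes "finite V" "1 \<le> j" and "\<And>S. is_kpvc V E j S \<Longrightarrow> m \<le> card S"
  shows "m \<le> psi V E j"
proof -
  have "is_kpvc V E j V" using assms(2) unfolding is_kpvc_def is_path_def by (auto simp: Int_absorb2)
  then show ?thesis unfolding psi_def using assms by (subst Min_ge_iff) (auto simp: finite_kpvcs)
qed

lemma is_kpvc_if_card_Diff_less:
  assumes "finite V" "S \<subseteq> V" "card (V - S) < j"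
  shows "is_kpvc V E j S"
  unfolding is_kpvc_def
proof (intro conjI allI impI)
  fix p assume p: "is_path V E p \<and> length p = j"
  show "set p \<inter> S \<noteq> {}"
  proof
    assume "set p \<inter> S = {}"
    then have "set p \<subseteq> V - S" using p unfolding is_path_def by blast
    then have "card (set p) \<le> card (V - S)" using assms(1) by (simp add: card_mono)
    then show False using p length_path assms(3) by fastforce
  qed
qed (rule assms(2))

lemma is_kpvc_Diff_iff:
  assumes "finite V" "T \<subseteq> V" "card T = j"
  shows "is_kpvc V E j (V - T) \<longleftrightarrow> \<not> traceable V E T"
proof -
  have "set p \<inter> (V - T) = {} \<longleftrightarrow> set p = T" if "is_path V E p" "length p = j" for p
  proof -
    have "set p \<inter> (V - T) = {} \<longleftrightarrow> set p \<subseteq> T" using that(1) unfolding is_path_def by blast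
    also have "\<dots> \<longleftrightarrow> set p = T"
      using card_subset_eq[of T "set p"] finite_subset[OF assms(2,1)] assms(3) that length_path[OF that(1)]
      by auto
    finally show ?thesis .
  qed
  moreover have "length p = j" if "is_path V E p" "set p = T" for p
    using that assms(3) length_path by blast
  ultimately show ?thesis unfolding is_kpvc_def traceable_def by blast
qed

lemma psi_le_card_minus:
  assumes V: "finite V" and j: "1 \<le> j" "j \<le> card V"
  shows "psi V E j \<le> card V - j + 1"
proof -
  obtain T where T: "T \<subseteq> V" "card T = j - 1"
    using obtain_subset_with_card_n[of "j - 1" V] j by (metis diff_le_self le_trans)
  have "V - (V - T) = T" using T(1) by blast
  then have "is_kpvc V E j (V - T)" using is_kpvc_if_card_Diff_less[OF V, of "V - T" j] T(2) j(1) by simp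
  then show ?thesis using psi_le_card[OF V] T V j by (fastforce simp: card_Diff_subset finite_subset)
qed

lemma card_kpvc_ge_if_all_traceable:
  assumes V: "finite V" and "j \<le> card V" and all: "\<forall>T\<subseteq>V. card T = j \<longrightarrow> traceable V E T"
    and S: "is_kpvc V E j S"
  shows "card V - j + 1 \<le> card S"
proof (rule ccontr)
  assume "\<not> ?thesis"
  moreover have "S \<subseteq> V" using S unfolding is_kpvc_def by blast
  ultimately have "j \<le> card (V - S)" using V assms(2) by (simp add: card_Diff_subset finite_subset)
  then obtain T where T: "T \<subseteq> V - S" "card T = j" by (meson obtain_subset_with_card_n)
  then obtain p where p: "is_path V E p" "set p = T" using all unfolding traceable_def by blast
  then have "set p \<inter> S \<noteq> {}" using S T(2) length_path[OF p(1)] unfolding is_kpvc_def by metis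
  then show False using p(2) T(1) by blast
qed

lemma psi_eq_iff_all_traceable:
  assumes V: "finite V" and j: "1 \<le> j" "j \<le> card V"
  shows "psi V E j = card V - j + 1 \<longleftrightarrow> (\<forall>T\<subseteq>V. card T = j \<longrightarrow> traceable V E T)"
proof
  assume psi: "psi V E j = card V - j + 1"
  show "\<forall>T\<subseteq>V. card T = j \<longrightarrow> traceable V E T"
  proof (intro allI impI)
    fix T assume T: "T \<subseteq> V" "card T = j"
    show "traceable V E T"
    proof (rule ccontr)
      assume "\<not> traceable V E T"
      then have "psi V E j \<le> card (V - T)"
        using psi_le_card[OF V] is_kpvc_Diff_iff[OF V T] by blast
      also have "\<dots> = card V - j" using T V by (simp add: card_Diff_subset finite_subset)
      finally show False using psi by simp
    qed
  qed
next
  assume "\<forall>T\<subseteq>V. card T = j \<longrightarrow> traceable V E T"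
  then have "card V - j + 1 \<le> psi V E j"
    using le_psi[OF V j(1)] card_kpvc_ge_if_all_traceable[OF V j(2)] by blast
  then show "psi V E j = card V - j + 1" using psi_le_card_minus[OF V j, of E] by simp
qed

theorem mainTheorem14:
  fixes V :: "'a set" and E :: "'a \<Rightarrow> 'a \<Rightarrow> bool" and n k :: nat
  assumes "simple_graph V E"
    and "card V = n" and "3 \<le> n" and "n \<le> 7"
    and "2 \<le> k" and "k < n"
    and "psi V E k = n - k + 1"
  shows "\<forall>j. k < j \<and> j \<le> n \<longrightarrow> psi V E j = n - j + 1"
proof (intro allI impI)
  fix j assume j: "k < j \<and> j \<le> n"
  have V: "finite V" using assms(1) by (rule simple_graph_finite)
  have "\<forall>T\<subseteq>V. card T = k \<longrightarrow> traceable V E T"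
    using psi_eq_iff_all_traceable[OF V, of k E] assms by simp
  then have "\<forall>T\<subseteq>V. card T = j \<longrightarrow> traceable V E T"
    using all_traceable_upward[OF assms(1,5), of j] j assms(4) by simp
  then show "psi V E j = n - j + 1"
    using psi_eq_iff_all_traceable[OF V, of j E] j assms(2) by simp
qed

end
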